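(* Let $f:\mathbb R_+\to\mathbb R_+$ be continuous with $f(0)=0$ and $f(u)>0$ for $u>0$, and consider the dynamics on $S_4$ given, for a payoff matrix $U$, by $$\dot x_i=f(k_i(x))-x_i\sum_{j=1}^4 f(k_j(x)),\qquad k_i(x)=\max(0,(Ux)_i-x\cdot Ux).$$ Let $\varepsilon\in(0,1)$, let $$U_0= \begin{pmatrix} 0 & -1 & \varepsilon & 0 \\ \varepsilon & 0 & -1 & 0 \\ -1 & \varepsilon & 0 & 0 \\ \frac{-1+\varepsilon}{3} & \frac{-1+\varepsilon}{3} & \frac{-1+\varepsilon}{3} & 0 \end{pmatrix},$$ $n=(1/3,1/3,1/3,0)$ and $E_0=\{\lambda n+(1-\lambda)e_4:\lambda\in[0,1]\}$. If $C$ is a closed subset of $S_4$ disjoint from $E_0$, then there exists a neighborhood $\mathcal N$ of $U_0$ such that, for every payoff matrix $U\in\mathcal N$ and every initial condition in $C$, the solution satisfies $x_4(t)\to0$ as $t\to+\infty$.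
   Context: $S_4$ is the simplex of mixed strategies of a symmetric two-player game with four pure strategies and payoff matrix $U$; $e_4$ is its fourth vertex. *)

theory Defs
  imports "HOL-Analysis.Analysis"
begin

text \<open>Strategies are indexed by the numeral type 4; the pure strategies
  1,2,3,4 are the elements 1,2,3,4 of this type (note 4 = 0 in type 4).\<close>

definition S4 :: "(real^4) set" where
  "S4 = {x. (\<forall>i. 0 \<le> x $ i) \<and> (\<Sum>i\<in>UNIV. x $ i) = 1}"

definition e4 :: "real^4" where
  "e4 = (\<chi> i. if i = 4 then 1 else 0)"

definition nvec :: "real^4" where
  "nvec = (\<chi> i. if i = 4 then 0 else 1/3)"

definition E0 :: "(real^4) set" where
  "E0 = {l *\<^sub>R nvec + (1 - l) *\<^sub>R e4 | l. l \<in> {0..1}}"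

definition U0 :: "real \<Rightarrow> real^4^4" where
  "U0 \<epsilon> = (\<chi> i j.
     if i = 1 then (if j = 1 then 0 else if j = 2 then -1 else if j = 3 then \<epsilon> else 0)
     else if i = 2 then (if j = 1 then \<epsilon> else if j = 2 then 0 else if j = 3 then -1 else 0)
     else if i = 3 then (if j = 1 then -1 else if j = 2 then \<epsilon> else if j = 3 then 0 else 0)
     else (if j = 4 then 0 else (-1 + \<epsilon>) / 3))"

definition kfun :: "real^4^4 \<Rightarrow> real^4 \<Rightarrow> 4 \<Rightarrow> real" where
  "kfun U x i = max 0 ((U *v x) $ i - x \<bullet> (U *v x))"

definition vfield :: "(real \<Rightarrow> real) \<Rightarrow> real^4^4 \<Rightarrow> real^4 \<Rightarrow> real^4" where
  "vfield f U x = (\<chi> i. f (kfun U x i) - x $ i * (\<Sum>j\<in>UNIV. f (kfun U x j)))"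

definition is_solution :: "(real \<Rightarrow> real) \<Rightarrow> real^4^4 \<Rightarrow> (real \<Rightarrow> real^4) \<Rightarrow> bool" where
  "is_solution f U x \<longleftrightarrow>
     (\<forall>t\<ge>0. x t \<in> S4 \<and> (x has_vector_derivative vfield f U (x t)) (at t within {0..}))"

end

theory Submission
  imports Defs
begin

text \<open>For \<open>U0 \<epsilon>\<close> the fourth strategy earns \<open>(1 - \<epsilon>)/6 \<cdot> N(x)\<close> less than the average,
  where \<open>N\<close> (\<open>imbalance\<close>) measures how far \<open>(x1, x2, x3)\<close> is from balanced; on \<open>S4\<close>, \<open>N\<close>
  vanishes exactly along \<open>E0\<close>. So \<open>x4\<close> decays as long as \<open>N\<close> stays bounded away from \<open>0\<close>, and
  the point is to rule out that \<open>N\<close> shrinks. The function \<open>\<Gamma>(x) = \<Sum>i \<Psi>((Ux)i - x\<cdot>Ux)\<close>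
  with \<open>\<Psi>' = f(max 0 _)\<close> vanishes on \<open>E0\<close> and is positive off it for \<open>U0 \<epsilon>\<close>, and it strictly
  increases along the \<open>U0 \<epsilon>\<close>-flow in a thin band \<open>n1 \<le> N \<le> n2\<close> (the rock-paper-scissors block
  pushes orbits away from its interior equilibrium). Hence, for some level \<open>a\<close>, \<open>\<Gamma> > a\<close> where
  \<open>N \<ge> n2\<close>, \<open>\<Gamma> \<le> a\<close> where \<open>N \<le> n1\<close>, and \<open>\<Gamma>' > 0\<close> in the band; by compactness these
  survive small perturbations of \<open>U0 \<epsilon>\<close>. An orbit starting in \<open>C\<close>, where \<open>N \<ge> n2\<close>, thus never
  reaches \<open>N \<le> n1\<close>: it would have to cross the band while \<open>\<Gamma>\<close> drops. Once \<open>N > n1\<close> for all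
  times, the fourth excess payoff is negative and the total rate is bounded below, so
  \<open>x4' \<le> -k x4\<close>.\<close>

lemma compact_pos_lower_bound:
  fixes h :: "'a::topological_space \<Rightarrow> real"
  assumes "compact K" "continuous_on K h" "\<forall>x\<in>K. 0 < h x"
  shows "\<exists>m>0. \<forall>x\<in>K. m \<le> h x"
proof (cases "K = {}")
  case True
  then show ?thesis by (intro exI[of _ 1]) simp
next
  case False
  then obtain y where "y \<in> K" "\<forall>x\<in>K. h y \<le> h x"
    using continuous_attains_inf[OF assms(1) False assms(2)] by blast
  then show ?thesis using assms(3) by blast
qed

lemma compact_uniform_smallness:
  fixes g h :: "'a::t2_space \<Rightarrow> real"
  assumes K: "compact K" and gc: "continuous_on K g" and hc: "continuous_on K h"
    and gh: "\<forall>x\<in>K. h x \<le> 0 \<longrightarrow> g x \<le> 0" and a: "0 < a"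
  shows "\<exists>\<eta>>0. \<forall>x\<in>K. h x \<le> \<eta> \<longrightarrow> g x < a"
proof -
  define K' where "K' = K \<inter> g -` {a..}"
  have "closed K'"
    unfolding K'_def using continuous_closed_preimage[OF gc compact_imp_closed[OF K]] by simp
  then have "compact K'"
    using compact_Int_closed[OF K] by (metis K'_def Int_left_absorb)
  moreover have "0 < h x" if "x \<in> K'" for x
    using that gh a unfolding K'_def by (cases "h x \<le> 0") auto
  moreover have "continuous_on K' h"
    using continuous_on_subset[OF hc] unfolding K'_def by blast
  ultimately obtain m where m: "0 < m" "\<forall>x\<in>K'. m \<le> h x"
    using compact_pos_lower_bound by blast
  have "g x < a" if "x \<in> K" "h x \<le> m/2" for x
    using that m(1) m(2)[rule_format, of x] unfolding K'_def by (cases "a \<le> g x") auto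
  then show ?thesis using m(1) by (intro exI[of _ "m/2"]) auto
qed

lemma robust_positivity:
  fixes h :: "'p::heine_borel \<Rightarrow> 'a::metric_space \<Rightarrow> real"
  assumes K: "compact K" and hc: "continuous_on UNIV (\<lambda>z. h (fst z) (snd z))"
    and pos: "\<And>x. x \<in> K \<Longrightarrow> 0 < h p0 x"
  obtains \<delta> where "0 < \<delta>" "\<And>p x. dist p p0 < \<delta> \<Longrightarrow> x \<in> K \<Longrightarrow> 0 < h p x"
proof -
  have "continuous_on K (h p0)"
    using continuous_on_compose2[OF hc continuous_on_Pair[OF continuous_on_const continuous_on_id]]
    by simp
  then obtain m where m: "0 < m" "\<forall>x\<in>K. m \<le> h p0 x"
    using compact_pos_lower_bound[OF K] pos by blast
  have "compact (cball p0 1 \<times> K)" using K by (intro compact_Times) auto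
  then have "uniformly_continuous_on (cball p0 1 \<times> K) (\<lambda>z. h (fst z) (snd z))"
    by (intro compact_uniformly_continuous continuous_on_subset[OF hc]) auto
  then obtain d where d: "0 < d" and hd: "\<forall>z\<in>cball p0 1 \<times> K. \<forall>z'\<in>cball p0 1 \<times> K.
      dist z' z < d \<longrightarrow> dist (h (fst z') (snd z')) (h (fst z) (snd z)) < m"
    unfolding uniformly_continuous_on_def using m(1) by blast
  show ?thesis
  proof (rule that[of "min d 1"])
    fix p x assume p: "dist p p0 < min d 1" and x: "x \<in> K"
    have "(p, x) \<in> cball p0 1 \<times> K" "(p0, x) \<in> cball p0 1 \<times> K"
      using p x by (auto simp: dist_commute)
    moreover have "dist (p, x) (p0, x) < d" using p by (simp add: dist_Pair_Pair)
    ultimately have "dist (h p x) (h p0 x) < m" using hd by fastforce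
    then show "0 < h p x" using m(2) x by (auto simp: dist_real_def)
  qed (simp add: d)
qed

lemma compact_interval_sublevel:
  fixes N :: "real \<Rightarrow> real"
  assumes "continuous_on {a..b} N" "closed T"
  shows "compact ({a..b} \<inter> N -` T)"
  using continuous_closed_preimage[OF assms(1) closed_atLeastAtMost assms(2)]
  by (simp add: compact_eq_bounded_closed bounded_Int)

lemma stays_above_lower_level:
  fixes N V :: "real \<Rightarrow> real"
  assumes Nc: "continuous_on {0..} N" and Vc: "continuous_on {0..} V"
    and start: "n2 \<le> N 0" and levels: "n1 < n2"
    and mono: "\<And>t. 0 < t \<Longrightarrow> n1 < N t \<Longrightarrow> N t < n2 \<Longrightarrow>
                 \<exists>y. (V has_real_derivative y) (at t) \<and> 0 \<le> y"
    and high: "\<And>t. 0 \<le> t \<Longrightarrow> n2 \<le> N t \<Longrightarrow> a < V t"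
    and low: "\<And>t. 0 \<le> t \<Longrightarrow> N t \<le> n1 \<Longrightarrow> V t \<le> a"
    and t: "0 \<le> t"
  shows "n1 < N t"
proof (rule ccontr)
  assume "\<not> n1 < N t"
  define T1 where "T1 = {0..t} \<inter> N -` {..n1}"
  have "compact T1" unfolding T1_def
    by (rule compact_interval_sublevel) (auto intro: continuous_on_subset[OF Nc])
  moreover have "t \<in> T1" using t \<open>\<not> n1 < N t\<close> unfolding T1_def by auto
  ultimately obtain t1 where "t1 \<in> T1" and first: "\<And>s. s \<in> T1 \<Longrightarrow> t1 \<le> s"
    using compact_attains_inf[of T1] by blast
  then have t1: "0 \<le> t1" "t1 \<le> t" "N t1 \<le> n1" unfolding T1_def by auto
  define T0 where "T0 = {0..t1} \<inter> N -` {n2..}"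
  have "compact T0" unfolding T0_def
    by (rule compact_interval_sublevel) (use t1 in \<open>auto intro: continuous_on_subset[OF Nc]\<close>)
  moreover have "0 \<in> T0" using start t1 unfolding T0_def by auto
  ultimately obtain t0 where "t0 \<in> T0" and last: "\<And>s. s \<in> T0 \<Longrightarrow> s \<le> t0"
    using compact_attains_sup[of T0] by blast
  then have t0: "0 \<le> t0" "t0 \<le> t1" "n2 \<le> N t0" unfolding T0_def by auto
  have "t0 \<noteq> t1" using t0 t1 levels by auto
  then have "t0 < t1" using t0 by simp
  have "V t0 \<le> V t1"
  proof (rule DERIV_nonneg_imp_increasing_open[OF less_imp_le[OF \<open>t0 < t1\<close>]])
    fix s assume s: "t0 < s" "s < t1"
    have "n1 < N s"
      using first[of s] s t0 t1 unfolding T1_def by (cases "N s \<le> n1") auto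
    moreover have "N s < n2"
      using last[of s] s t0 unfolding T0_def by (cases "n2 \<le> N s") auto
    ultimately show "\<exists>y. (V has_real_derivative y) (at s) \<and> 0 \<le> y" using mono s t0 by simp
  qed (use t0 t1 in \<open>auto intro: continuous_on_subset[OF Vc]\<close>)
  moreover have "a < V t0" "V t1 \<le> a" using high low t0 t1 by auto
  ultimately show False by simp
qed

lemma nonneg_decay_tendsto_zero:
  fixes y y' :: "real \<Rightarrow> real"
  assumes k: "0 < k" and yc: "continuous_on {0..} y"
    and yd: "\<And>t. 0 < t \<Longrightarrow> (y has_real_derivative y' t) (at t)"
    and decay: "\<And>t. 0 < t \<Longrightarrow> y' t \<le> - k * y t"
    and nonneg: "\<And>t. 0 \<le> t \<Longrightarrow> 0 \<le> y t"
  shows "(y \<longlongrightarrow> 0) at_top"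
proof -
  have bound: "y t \<le> y 0 * exp (- (k * t))" if "0 \<le> t" for t
  proof -
    have "y t * exp (k * t) \<le> y 0 * exp (k * 0)"
    proof (rule DERIV_nonpos_imp_decreasing_open[OF that])
      fix s assume s: "0 < s" "s < t"
      have "((\<lambda>t. exp (k * t)) has_real_derivative exp (k * s) * k) (at s)"
        by (auto intro!: derivative_eq_intros)
      from DERIV_mult[OF yd[OF s(1)] this]
      have "((\<lambda>t. y t * exp (k * t)) has_real_derivative (y' s + k * y s) * exp (k * s)) (at s)"
        by (simp add: algebra_simps)
      moreover have "(y' s + k * y s) * exp (k * s) \<le> 0"
        using decay[OF s(1)] by (intro mult_nonpos_nonneg) auto
      ultimately show "\<exists>z. ((\<lambda>t. y t * exp (k * t)) has_real_derivative z) (at s) \<and> z \<le> 0"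
        by auto
    next
      have "continuous_on {0..t} y" using continuous_on_subset[OF yc] by auto
      then show "continuous_on {0..t} (\<lambda>t. y t * exp (k * t))"
        by (auto intro!: continuous_intros)
    qed
    then show ?thesis by (simp add: exp_minus field_simps)
  qed
  have "filterlim (\<lambda>t. k * t) at_top at_top"
    by (rule filterlim_tendsto_pos_mult_at_top[OF tendsto_const k filterlim_ident])
  then have "((\<lambda>t. exp (- (k * t))) \<longlongrightarrow> 0) at_top"
    by (rule filterlim_compose[OF exp_at_bot filterlim_compose[OF filterlim_uminus_at_bot_at_top]])
  then have lim: "((\<lambda>t. y 0 * exp (- (k * t))) \<longlongrightarrow> 0) at_top"
    by (rule tendsto_mult_right_zero)
  show ?thesis
  proof (rule tendsto_sandwich[OF _ _ tendsto_const lim])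
    show "\<forall>\<^sub>F t in at_top. 0 \<le> y t"
      using eventually_ge_at_top[of 0] by (rule eventually_mono) (rule nonneg)
    show "\<forall>\<^sub>F t in at_top. y t \<le> y 0 * exp (- (k * t))"
      using eventually_ge_at_top[of 0] by (rule eventually_mono) (rule bound)
  qed
qed

lemma has_real_derivative_vec_nth:
  assumes "(x has_vector_derivative v) F"
  shows "((\<lambda>t. x t $ i) has_real_derivative v $ i) F"
proof -
  have "((\<lambda>t. x t $ i) has_derivative (\<lambda>h. (h *\<^sub>R v) $ i)) F"
    by (rule bounded_linear.has_derivative[OF bounded_linear_vec_nth
          assms[unfolded has_vector_derivative_def]])
  moreover have "(\<lambda>h. (h *\<^sub>R v) $ i) = (*) (v $ i)" by (simp add: fun_eq_iff)
  ultimately show ?thesis unfolding has_field_derivative_def by simp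
qed

lemma continuous_on_slice:
  assumes "continuous_on UNIV (\<lambda>z. h (fst z) (snd z))"
  shows "continuous_on S (h p)"
  using continuous_on_compose2[OF assms continuous_on_Pair[OF continuous_on_const continuous_on_id]]
  by simp

lemma continuous_on_mult_vec [continuous_intros]:
  fixes A :: "'a::topological_space \<Rightarrow> real^'n^'m" and v :: "'a \<Rightarrow> real^'n"
  assumes "continuous_on S A" "continuous_on S v"
  shows "continuous_on S (\<lambda>p. A p *v v p)"
  unfolding matrix_vector_mult_def by (intro continuous_intros assms)

locale rate_function =
  fixes f :: "real \<Rightarrow> real"
  assumes continuous: "continuous_on {0..} f" and zero: "f 0 = 0"
    and positive: "\<And>u. 0 < u \<Longrightarrow> 0 < f u"
begin

lemma nonneg: "0 \<le> u \<Longrightarrow> 0 \<le> f u"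
  using zero positive by (cases "u = 0") (auto intro: less_imp_le)

end

text \<open>Any lower limit \<open>\<le> 0\<close> would do: the integrand vanishes on the negative axis.\<close>
definition rate_primitive :: "(real \<Rightarrow> real) \<Rightarrow> real \<Rightarrow> real" where
  "rate_primitive f u = integral {-1..u} (\<lambda>s. f (max 0 s))"

context rate_function
begin

lemma rate_primitive_nonpos: "u \<le> 0 \<Longrightarrow> rate_primitive f u = 0"
proof -
  assume "u \<le> 0"
  then have "rate_primitive f u = integral {-1..u} (\<lambda>s. 0::real)"
    unfolding rate_primitive_def by (intro integral_cong) (auto simp: zero)
  then show ?thesis by simp
qed

lemma has_real_derivative_rate_primitive:
  "(rate_primitive f has_real_derivative f (max 0 u)) (at u)"
proof (cases "u < 0")
  case True
  have "(rate_primitive f has_real_derivative 0) (at u)"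
    by (rule has_field_derivative_transform_within_open[where S="{..<0}", of "\<lambda>_. 0"])
      (use True rate_primitive_nonpos in auto)
  then show ?thesis using True zero by simp
next
  case False
  have "continuous_on UNIV (\<lambda>s. f (max 0 s))"
    by (rule continuous_on_compose2[OF continuous]) (auto intro!: continuous_intros)
  then have "((\<lambda>v. integral {-1..v} (\<lambda>s. f (max 0 s))) has_real_derivative f (max 0 u))
          (at u within {-1..u+1})"
    by (intro integral_has_real_derivative) (use False in \<open>auto intro: continuous_on_subset\<close>)
  moreover have "at u within {-1..u+1} = at u"
    by (rule at_within_interior) (use False in auto)
  ultimately show ?thesis unfolding rate_primitive_def[abs_def] by simp
qed

lemma continuous_on_rate_primitive: "continuous_on S (rate_primitive f)"
  by (meson has_real_derivative_rate_primitive DERIV_isCont continuous_at_imp_continuous_on)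

lemma rate_primitive_mean_value:
  assumes "0 < u" obtains s where "0 < s" "s < u" "rate_primitive f u = u * f s"
proof -
  obtain s where "0 < s" "s < u"
    "rate_primitive f u - rate_primitive f 0 = (u - 0) * f (max 0 s)"
    using MVT2[OF assms, of "rate_primitive f" "\<lambda>v. f (max 0 v)"]
      has_real_derivative_rate_primitive by blast
  then show ?thesis using that rate_primitive_nonpos[of 0] by simp
qed

lemma rate_primitive_nonneg: "0 \<le> rate_primitive f u"
proof (cases "u \<le> 0")
  case False
  then obtain s where "0 < s" "rate_primitive f u = u * f s"
    using rate_primitive_mean_value[of u] by auto
  then show ?thesis using False nonneg[of s] by simp
qed (simp add: rate_primitive_nonpos)

lemma rate_primitive_pos: "0 < u \<Longrightarrow> 0 < rate_primitive f u"
  using rate_primitive_mean_value positive by (metis mult_pos_pos)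

end

definition excess :: "real^4^4 \<Rightarrow> real^4 \<Rightarrow> 4 \<Rightarrow> real" where
  "excess U x i = (U *v x) $ i - x \<bullet> (U *v x)"

definition imbalance :: "real^4 \<Rightarrow> real" where
  "imbalance x = (x$1 - x$2)^2 + (x$2 - x$3)^2 + (x$3 - x$1)^2"

lemma kfun_eq_max_excess: "kfun U x i = max 0 (excess U x i)"
  unfolding kfun_def excess_def ..

lemma S4_nonneg: "x \<in> S4 \<Longrightarrow> 0 \<le> x $ i"
  unfolding S4_def by simp

lemma S4_coord4: "x \<in> S4 \<Longrightarrow> x $ 4 = 1 - x $ 1 - x $ 2 - x $ 3"
  unfolding S4_def by (simp add: sum_4)

lemma compact_S4: "compact S4"
proof -
  have "closed S4"
    unfolding S4_def Collect_conj_eq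
    by (intro closed_Int closed_Collect_all closed_Collect_le closed_Collect_eq continuous_intros)
  moreover have "norm x \<le> 1" if "x \<in> S4" for x
    using norm_le_l1_cart[of x] that unfolding S4_def by simp
  then have "bounded S4" unfolding bounded_iff by blast
  ultimately show ?thesis by (simp add: compact_eq_bounded_closed)
qed

lemma inner_vec4: "x \<bullet> (y::real^4) = x$1 * y$1 + x$2 * y$2 + x$3 * y$3 + x$4 * y$4"
  by (simp add: inner_vec_def sum_4)

lemma U0_mult_vec:
  "(U0 e *v x) $ 1 = - x$2 + e * x$3" "(U0 e *v x) $ 2 = e * x$1 - x$3"
  "(U0 e *v x) $ 3 = - x$1 + e * x$2" "(U0 e *v x) $ 4 = (e - 1)/3 * (x$1 + x$2 + x$3)"
  unfolding matrix_vector_mult_def U0_def by (simp_all add: sum_4 algebra_simps)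

lemma excess_U0:
  assumes "x \<in> S4"
  shows "excess (U0 e) x 1 = ((1-e)*(x$1-x$2) - (1+2*e)*(x$2-x$3))/3 - (1-e)/6 * imbalance x"
    and "excess (U0 e) x 2 = ((1-e)*(x$2-x$3) - (1+2*e)*(x$3-x$1))/3 - (1-e)/6 * imbalance x"
    and "excess (U0 e) x 3 = ((1-e)*(x$3-x$1) - (1+2*e)*(x$1-x$2))/3 - (1-e)/6 * imbalance x"
    and "excess (U0 e) x 4 = -(1-e)/6 * imbalance x"
  unfolding excess_def imbalance_def inner_vec4 U0_mult_vec S4_coord4[OF assms]
  by (simp_all add: power2_eq_square field_simps)

lemma imbalance_nonneg: "0 \<le> imbalance x"
  unfolding imbalance_def by simp

lemma continuous_on_imbalance: "continuous_on S imbalance"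
  unfolding imbalance_def by (intro continuous_intros)

lemma excess_U0_4_neg:
  assumes "x \<in> S4" "e < 1" "0 < imbalance x" shows "excess (U0 e) x 4 < 0"
proof -
  have "0 < (1 - e) * imbalance x" using assms(2,3) by simp
  moreover have "excess (U0 e) x 4 = - ((1 - e) * imbalance x) / 6"
    using excess_U0(4)[OF assms(1), of e] by (simp add: field_simps)
  ultimately show ?thesis by linarith
qed

lemma excess_U0_balanced:
  assumes "x \<in> S4" "imbalance x = 0"
  shows "excess (U0 e) x i = 0"
proof -
  have "(x$1 - x$2)^2 = 0" "(x$2 - x$3)^2 = 0"
    using assms(2) unfolding imbalance_def by (smt (verit) zero_le_power2)+
  then have "x$1 = x$2" "x$2 = x$3" by simp_all
  then show ?thesis
    using excess_U0[OF assms(1), of e] assms(2) exhaust_4[of i] by auto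
qed

lemma excess_U0_sum:
  "x \<in> S4 \<Longrightarrow> excess (U0 e) x 1 + excess (U0 e) x 2 + excess (U0 e) x 3 = -(1-e)/2 * imbalance x"
  unfolding excess_U0 by (simp add: field_simps)

text \<open>The cyclic rock-paper-scissors block of \<open>U0 \<epsilon>\<close> makes this weighted sum positive off \<open>E0\<close>.\<close>
lemma excess_U0_weighted:
  assumes "x \<in> S4" "e \<le> 1"
  shows "e/2 * imbalance x \<le> x$3 * excess (U0 e) x 1 + x$1 * excess (U0 e) x 2 + x$2 * excess (U0 e) x 3"
proof -
  have "x$3 * excess (U0 e) x 1 + x$1 * excess (U0 e) x 2 + x$2 * excess (U0 e) x 3
      = e/2 * imbalance x + (1-e)/6 * imbalance x * x$4"
    unfolding excess_U0[OF assms(1)] S4_coord4[OF assms(1)] imbalance_def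
    by (simp add: power2_eq_square field_simps)
  moreover have "0 \<le> (1-e)/6 * imbalance x * x$4"
    using assms S4_nonneg imbalance_nonneg by simp
  ultimately show ?thesis by linarith
qed

lemma excess_U0_pos:
  assumes "x \<in> S4" "0 < e" "e \<le> 1" "0 < imbalance x"
  shows "\<exists>i\<in>{1,2,3}. 0 < excess (U0 e) x i"
proof (rule ccontr)
  assume "\<not> ?thesis"
  then have "x$3 * excess (U0 e) x 1 + x$1 * excess (U0 e) x 2 + x$2 * excess (U0 e) x 3 \<le> 0"
    using S4_nonneg[OF assms(1)] by (auto intro!: add_nonpos_nonpos mult_nonneg_nonpos)
  moreover have "0 < e/2 * imbalance x" using assms by simp
  ultimately show False using excess_U0_weighted[OF assms(1,3)] by linarith
qed

lemma imbalance_zero_imp_E0: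
  assumes x: "x \<in> S4" and N: "imbalance x = 0"
  shows "x \<in> E0"
proof -
  have "(x$1 - x$2)^2 = 0" "(x$3 - x$1)^2 = 0"
    using N unfolding imbalance_def by (smt (verit) zero_le_power2)+
  then have "x$2 = x$1" "x$3 = x$1" by simp_all
  moreover have "0 \<le> 3 * x$1" "3 * x$1 \<le> 1"
    using S4_nonneg[OF x, of 1] S4_nonneg[OF x, of 4] S4_coord4[OF x] calculation by auto
  ultimately have "x = (3 * x$1) *\<^sub>R nvec + (1 - 3 * x$1) *\<^sub>R e4"
    unfolding vec_eq_iff forall_4 nvec_def e4_def using S4_coord4[OF x] by simp
  then show ?thesis unfolding E0_def using \<open>0 \<le> 3 * x$1\<close> \<open>3 * x$1 \<le> 1\<close> by fastforce
qed

lemma imbalance_diff_ge: "imbalance u / 2 - imbalance v \<le> imbalance (u - v)"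
proof -
  have "p^2 / 2 - d^2 \<le> (p - d)^2" for p d :: real
    using zero_le_power2[of "p - 2*d"] by (simp add: power2_eq_square algebra_simps)
  from this[of "u$1 - u$2" "v$1 - v$2"] this[of "u$2 - u$3" "v$2 - v$3"] this[of "u$3 - u$1" "v$3 - v$1"]
  show ?thesis unfolding imbalance_def by (simp add: algebra_simps)
qed

lemma imbalance_scaleR: "imbalance (c *\<^sub>R x) = c^2 * imbalance x"
  unfolding imbalance_def by (simp add: power2_eq_square algebra_simps)

lemma sum_sq_le_imbalance:
  assumes "u$1 = 0 \<or> u$2 = 0 \<or> u$3 = 0"
  shows "(u$1 + u$2 + u$3)^2 \<le> 2 * imbalance u"
proof -
  have key: "(p + q)^2 \<le> 2 * (p^2 + (p - q)^2 + q^2)" for p q :: real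
    using zero_le_power2[of "p - q"] by (simp add: power2_eq_square algebra_simps)
  show ?thesis using assms
  proof (elim disjE)
    assume "u$1 = 0" then show ?thesis
      using key[of "u$2" "u$3"] unfolding imbalance_def by (simp add: power2_commute)
  next
    assume "u$2 = 0" then show ?thesis
      using key[of "u$3" "u$1"] unfolding imbalance_def by (simp add: power2_commute add.commute)
  next
    assume "u$3 = 0" then show ?thesis
      using key[of "u$1" "u$2"] unfolding imbalance_def by (simp add: power2_commute)
  qed
qed

lemma quadratic_form_U0:
  assumes "z$4 = -(z$1 + z$2 + z$3)"
  shows "z \<bullet> (U0 e *v z) = (1-e)/6 * imbalance z"
  unfolding inner_vec4 U0_mult_vec assms imbalance_def by (simp add: power2_eq_square field_simps)

lemma compact_S4_imbalance_vimage: "closed T \<Longrightarrow> compact (S4 \<inter> imbalance -` T)"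
  by (intro compact_Int_closed compact_S4 closed_vimage continuous_on_imbalance)

lemma imbalance_lower_bound_off_E0:
  assumes "closed C" "C \<subseteq> S4" "C \<inter> E0 = {}"
  obtains c where "0 < c" "\<And>x. x \<in> C \<Longrightarrow> c \<le> imbalance x"
proof -
  have "compact C" using compact_Int_closed[OF compact_S4 assms(1)] assms(2) by (simp add: Int_absorb1)
  moreover have "0 < imbalance x" if "x \<in> C" for x
  proof -
    have "imbalance x \<noteq> 0" using that assms(2,3) imbalance_zero_imp_E0 by blast
    then show ?thesis using imbalance_nonneg[of x] by linarith
  qed
  ultimately obtain c where "0 < c" "\<forall>x\<in>C. c \<le> imbalance x"
    using compact_pos_lower_bound[OF _ continuous_on_imbalance] by blast
  then show ?thesis by (intro that) auto
qed

lemma is_solution_continuous: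
  assumes "is_solution f U x" shows "continuous_on {0..} x"
  unfolding continuous_on_eq_continuous_within
proof
  fix t :: real assume "t \<in> {0..}"
  then have "(x has_vector_derivative vfield f U (x t)) (at t within {0..})"
    using assms unfolding is_solution_def by simp
  then show "continuous (at t within {0..}) x" by (rule has_vector_derivative_continuous)
qed

lemma is_solution_has_vector_derivative:
  assumes "is_solution f U x" "0 < t"
  shows "(x has_vector_derivative vfield f U (x t)) (at t)"
proof -
  have "(x has_vector_derivative vfield f U (x t)) (at t within {0..})"
    using assms unfolding is_solution_def by simp
  moreover have "at t within {0..} = at t" by (rule at_within_interior) (use assms(2) in simp)
  ultimately show ?thesis by simp
qed

definition rates :: "(real \<Rightarrow> real) \<Rightarrow> real^4^4 \<Rightarrow> real^4 \<Rightarrow> real^4" where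
  "rates f U x = (\<chi> i. f (kfun U x i))"

definition total_rate :: "(real \<Rightarrow> real) \<Rightarrow> real^4^4 \<Rightarrow> real^4 \<Rightarrow> real" where
  "total_rate f U x = (\<Sum>i\<in>UNIV. f (kfun U x i))"

definition lyapunov :: "(real \<Rightarrow> real) \<Rightarrow> real^4^4 \<Rightarrow> real^4 \<Rightarrow> real" where
  "lyapunov f U x = (\<Sum>i\<in>UNIV. rate_primitive f (excess U x i))"

text \<open>The derivative of \<open>lyapunov f U\<close> along the vector field \<open>vfield f U\<close>.\<close>
definition lyapunov_rate :: "(real \<Rightarrow> real) \<Rightarrow> real^4^4 \<Rightarrow> real^4 \<Rightarrow> real" where
  "lyapunov_rate f U x = (let v = vfield f U x in
     \<Sum>i\<in>UNIV. f (kfun U x i) * ((U *v v) $ i - v \<bullet> (U *v x) - x \<bullet> (U *v v)))"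

lemma vfield_eq_rates: "vfield f U x = rates f U x - total_rate f U x *\<^sub>R x"
  unfolding vfield_def rates_def total_rate_def by (simp add: vec_eq_iff)

lemma sum_vfield_S4: "x \<in> S4 \<Longrightarrow> (\<Sum>i\<in>UNIV. vfield f U x $ i) = 0"
  unfolding vfield_def S4_def by (simp add: sum_subtractf sum_distrib_right[symmetric])

lemma lyapunov_rate_eq:
  "lyapunov_rate f U x = vfield f U x \<bullet> (U *v vfield f U x)
     - total_rate f U x * (\<Sum>i\<in>UNIV. f (kfun U x i) * excess U x i)"
proof -
  define v where "v = vfield f U x"
  define F where "F = total_rate f U x"
  define a where "a = rates f U x"
  have a: "a = v + F *\<^sub>R x" unfolding v_def F_def a_def vfield_eq_rates by simp
  have "lyapunov_rate f U x = a \<bullet> (U *v v) - F * (v \<bullet> (U *v x)) - F * (x \<bullet> (U *v v))"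
    unfolding lyapunov_rate_def Let_def v_def[symmetric] a_def F_def total_rate_def rates_def
      inner_vec_def
    by (simp add: algebra_simps sum_subtractf sum_distrib_right sum.distrib)
  also have "\<dots> = v \<bullet> (U *v v) - F * (v \<bullet> (U *v x))"
    unfolding a by (simp add: inner_add_left)
  also have "v \<bullet> (U *v x) = a \<bullet> (U *v x) - F * (x \<bullet> (U *v x))"
    unfolding a by (simp add: inner_add_left)
  also have "\<dots> = (\<Sum>i\<in>UNIV. f (kfun U x i) * excess U x i)"
    unfolding a_def rates_def F_def total_rate_def excess_def inner_vec_def
    by (simp add: right_diff_distrib sum_subtractf sum_distrib_right)
  finally show ?thesis unfolding v_def F_def .
qed

lemma has_real_derivative_excess:
  assumes "(x has_vector_derivative v) (at t within s)"
  shows "((\<lambda>t. excess U (x t) i) has_real_derivative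
            (U *v v) $ i - v \<bullet> (U *v x t) - x t \<bullet> (U *v v)) (at t within s)"
proof -
  have x: "(x has_derivative (\<lambda>h. h *\<^sub>R v)) (at t within s)"
    using assms unfolding has_vector_derivative_def .
  have Ux: "((\<lambda>t. U *v x t) has_derivative (\<lambda>h. U *v (h *\<^sub>R v))) (at t within s)"
    using bounded_linear.has_derivative[OF matrix_vector_mul_bounded_linear x] .
  have "((\<lambda>t. excess U (x t) i) has_derivative
     (\<lambda>h. (U *v (h *\<^sub>R v)) $ i - (x t \<bullet> (U *v (h *\<^sub>R v)) + (h *\<^sub>R v) \<bullet> (U *v x t))))
     (at t within s)"
    unfolding excess_def
    by (intro has_derivative_diff has_derivative_inner[OF x Ux]
        bounded_linear.has_derivative[OF bounded_linear_vec_nth Ux])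
  then show ?thesis unfolding has_field_derivative_def
    by (rule has_derivative_eq_rhs) (auto simp: matrix_vector_mult_scaleR algebra_simps)
qed

lemma continuous_on_excess: "continuous_on S (\<lambda>p. excess (fst p) (snd p) i)"
  unfolding excess_def by (intro continuous_intros)

context rate_function
begin

lemma has_real_derivative_lyapunov:
  assumes "(x has_vector_derivative vfield f U (x t)) (at t within s)"
  shows "((\<lambda>t. lyapunov f U (x t)) has_real_derivative lyapunov_rate f U (x t)) (at t within s)"
  unfolding lyapunov_def lyapunov_rate_def Let_def kfun_eq_max_excess
  by (intro DERIV_sum DERIV_chain'[OF has_real_derivative_excess[OF assms]]
      has_real_derivative_rate_primitive)

lemma continuous_on_rate: "continuous_on S (\<lambda>p. f (kfun (fst p) (snd p) i))"
  unfolding kfun_eq_max_excess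
  by (rule continuous_on_compose2[OF continuous])
    (auto intro!: continuous_intros continuous_on_excess)

lemma continuous_on_total_rate: "continuous_on S (\<lambda>p. total_rate f (fst p) (snd p))"
  unfolding total_rate_def by (intro continuous_intros continuous_on_rate)

lemma continuous_on_lyapunov_rate: "continuous_on S (\<lambda>p. lyapunov_rate f (fst p) (snd p))"
  unfolding lyapunov_rate_def Let_def vfield_def
  by (intro continuous_intros continuous_on_rate)

lemma continuous_on_lyapunov: "continuous_on S (\<lambda>p. lyapunov f (fst p) (snd p))"
  unfolding lyapunov_def
  by (intro continuous_intros continuous_on_compose2[OF continuous_on_rate_primitive
        continuous_on_excess]) auto

lemma total_rate_U0_pos:
  assumes "x \<in> S4" "0 < e" "e \<le> 1" "0 < imbalance x"
  shows "0 < total_rate f (U0 e) x"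
proof -
  obtain j where "0 < excess (U0 e) x j" using excess_U0_pos[OF assms] by blast
  then have "0 < f (kfun (U0 e) x j)" unfolding kfun_eq_max_excess using positive by simp
  moreover have "0 \<le> f (kfun (U0 e) x i)" for i unfolding kfun_def by (simp add: nonneg)
  ultimately show ?thesis unfolding total_rate_def by (metis finite UNIV_I sum_pos2)
qed

lemma rate_U0_vanishes:
  assumes x: "x \<in> S4" and e: "e < 1" and N: "0 < imbalance x"
  shows "f (kfun (U0 e) x 4) = 0" "\<exists>i\<in>{1,2,3}. f (kfun (U0 e) x i) = 0"
proof -
  show "f (kfun (U0 e) x 4) = 0"
    unfolding kfun_eq_max_excess using excess_U0_4_neg[OF assms] zero by simp
  have "excess (U0 e) x 1 + excess (U0 e) x 2 + excess (U0 e) x 3 = - ((1 - e) * imbalance x) / 2"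
    using excess_U0_sum[OF x, of e] by (simp add: field_simps)
  moreover have "0 < (1 - e) * imbalance x" using e N by simp
  ultimately have "\<exists>i\<in>{1,2,3}. excess (U0 e) x i \<le> 0" by force
  then show "\<exists>i\<in>{1,2,3}. f (kfun (U0 e) x i) = 0"
    unfolding kfun_eq_max_excess using zero by (auto simp: max_def)
qed

lemma imbalance_vfield_U0_ge:
  assumes x: "x \<in> S4" and e: "e < 1" and N: "0 < imbalance x" "imbalance x \<le> 1/8"
  shows "(total_rate f (U0 e) x)^2 / 8 \<le> imbalance (vfield f (U0 e) x)"
proof -
  define a where "a = rates f (U0 e) x"
  define F where "F = total_rate f (U0 e) x"
  have "F = a$1 + a$2 + a$3"
    using rate_U0_vanishes(1)[OF x e N(1)] unfolding F_def total_rate_def sum_4 a_def rates_def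
    by simp
  moreover have "a$1 = 0 \<or> a$2 = 0 \<or> a$3 = 0"
    using rate_U0_vanishes(2)[OF x e N(1)] unfolding a_def rates_def by auto
  ultimately have "F^2 \<le> 2 * imbalance a" using sum_sq_le_imbalance by simp
  then have "F^2/4 - F^2 * (1/8) \<le> imbalance a / 2 - F^2 * imbalance x"
    using mult_left_mono[OF N(2), of "F^2"] by simp
  also have "\<dots> \<le> imbalance (vfield f (U0 e) x)"
    using imbalance_diff_ge[of a "F *\<^sub>R x"]
    unfolding vfield_eq_rates a_def[symmetric] F_def[symmetric] imbalance_scaleR by simp
  finally show ?thesis unfolding F_def by simp
qed

lemma lyapunov_rate_U0_pos:
  assumes e: "0 < e" "e < 1" and x: "x \<in> S4"
    and N: "0 < imbalance x" "imbalance x \<le> 1/8"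
    and small: "\<And>i. i \<in> {1,2,3} \<Longrightarrow> excess (U0 e) x i \<le> (1-e)/96"
  shows "0 < lyapunov_rate f (U0 e) x"
proof -
  define F where "F = total_rate f (U0 e) x"
  define z where "z = vfield f (U0 e) x"
  define S where "S = (\<Sum>i\<in>UNIV. f (kfun (U0 e) x i) * excess (U0 e) x i)"
  have "0 < F" unfolding F_def using total_rate_U0_pos[OF x e(1) _ N(1)] e(2) by simp
  have "f (kfun (U0 e) x i) * excess (U0 e) x i \<le> f (kfun (U0 e) x i) * ((1-e)/96)" for i
  proof (cases "i = 4")
    case True
    then show ?thesis using rate_U0_vanishes(1)[OF x e(2) N(1)] by simp
  next
    case False
    then have "i \<in> {1,2,3}" using exhaust_4[of i] by auto
    then show ?thesis using small nonneg by (intro mult_left_mono) (auto simp: kfun_def)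
  qed
  then have "S \<le> F * ((1-e)/96)"
    unfolding S_def F_def total_rate_def sum_distrib_right by (rule sum_mono)
  then have "F * S \<le> F * (F * ((1-e)/96))"
    using \<open>0 < F\<close> by (intro mult_left_mono) auto
  then have FS: "F * S \<le> (1-e)/96 * F^2" by (simp add: power2_eq_square mult_ac)
  have z4: "z$4 = -(z$1 + z$2 + z$3)"
    using sum_vfield_S4[OF x, of f "U0 e"] unfolding z_def sum_4 by linarith
  then have G: "lyapunov_rate f (U0 e) x = (1-e)/6 * imbalance z - F * S"
    using quadratic_form_U0[OF z4, of e] unfolding lyapunov_rate_eq z_def F_def S_def by simp
  have "(1-e)/6 * (F^2/8) \<le> (1-e)/6 * imbalance z"
    using imbalance_vfield_U0_ge[OF x e(2) N] e unfolding F_def z_def by (intro mult_left_mono) auto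
  moreover have "(1-e)/6 * (F^2/8) = 2 * ((1-e)/96 * F^2)" by simp
  moreover have "0 < (1-e)/96 * F^2" using e \<open>0 < F\<close> by simp
  ultimately show ?thesis unfolding G using FS by linarith
qed

lemma lyapunov_U0_pos:
  assumes "x \<in> S4" "0 < e" "e \<le> 1" "0 < imbalance x"
  shows "0 < lyapunov f (U0 e) x"
proof -
  obtain j where "j \<in> {1,2,3}" "0 < excess (U0 e) x j" using excess_U0_pos[OF assms] by blast
  then have "0 < rate_primitive f (excess (U0 e) x j)" using rate_primitive_pos by blast
  moreover have "0 \<le> rate_primitive f (excess (U0 e) x i)" for i by (rule rate_primitive_nonneg)
  ultimately show ?thesis
    unfolding lyapunov_def by (metis finite UNIV_I sum_pos2)
qed

lemma lyapunov_U0_balanced: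
  assumes "x \<in> S4" "imbalance x = 0"
  shows "lyapunov f (U0 e) x = 0"
  unfolding lyapunov_def excess_U0_balanced[OF assms] by (simp add: rate_primitive_nonpos)

lemma lyapunov_rate_U0_pos_near_balanced:
  assumes e: "0 < e" "e < 1"
  obtains n where "0 < n"
    "\<And>x. x \<in> S4 \<Longrightarrow> 0 < imbalance x \<Longrightarrow> imbalance x \<le> n \<Longrightarrow> 0 < lyapunov_rate f (U0 e) x"
proof -
  define g where "g x = max (excess (U0 e) x 1) (max (excess (U0 e) x 2) (excess (U0 e) x 3))" for x
  have "\<exists>\<eta>>0. \<forall>x\<in>S4. imbalance x \<le> \<eta> \<longrightarrow> g x < (1-e)/96"
  proof (rule compact_uniform_smallness[OF compact_S4 _ continuous_on_imbalance])
    have "continuous_on S4 (\<lambda>x. excess (U0 e) x i)" for i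
      using continuous_on_slice[where h="\<lambda>U x. excess U x i", OF continuous_on_excess] by simp
    then show "continuous_on S4 g" unfolding g_def by (intro continuous_intros)
    show "\<forall>x\<in>S4. imbalance x \<le> 0 \<longrightarrow> g x \<le> 0"
      using imbalance_nonneg excess_U0_balanced unfolding g_def by (simp add: order.antisym)
  qed (use e in simp)
  then obtain \<eta> where "0 < \<eta>" and \<eta>: "\<And>x. x \<in> S4 \<Longrightarrow> imbalance x \<le> \<eta> \<Longrightarrow> g x < (1-e)/96"
    by blast
  show ?thesis
  proof (rule that)
    show "0 < min (1/8) \<eta>" using \<open>0 < \<eta>\<close> by simp
    fix x assume x: "x \<in> S4" and N: "0 < imbalance x" "imbalance x \<le> min (1/8) \<eta>"
    then have "g x < (1-e)/96" using \<eta> by simp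
    then have "excess (U0 e) x i \<le> (1-e)/96" if "i \<in> {1,2,3}" for i
      using that unfolding g_def by auto
    then show "0 < lyapunov_rate f (U0 e) x"
      using lyapunov_rate_U0_pos[OF e x N(1)] N(2) by simp
  qed
qed

lemma lyapunov_U0_levels:
  assumes e: "0 < e" "e < 1" and c: "0 < c"
  obtains n1 n2 \<alpha> where "0 < n1" "n1 < n2" "n2 \<le> c" "0 < \<alpha>"
    "\<And>x. x \<in> S4 \<Longrightarrow> n2 \<le> imbalance x \<Longrightarrow> \<alpha> \<le> lyapunov f (U0 e) x"
    "\<And>x. x \<in> S4 \<Longrightarrow> imbalance x \<le> n1 \<Longrightarrow> lyapunov f (U0 e) x < \<alpha>/2"
    "\<And>x. x \<in> S4 \<Longrightarrow> n1 \<le> imbalance x \<Longrightarrow> imbalance x \<le> n2 \<Longrightarrow> 0 < lyapunov_rate f (U0 e) x"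
proof -
  obtain n where n: "0 < n"
    "\<And>x. x \<in> S4 \<Longrightarrow> 0 < imbalance x \<Longrightarrow> imbalance x \<le> n \<Longrightarrow> 0 < lyapunov_rate f (U0 e) x"
    using lyapunov_rate_U0_pos_near_balanced[OF e] by blast
  define n2 where "n2 = min n c"
  have "0 < n2" unfolding n2_def using n(1) c by simp
  have lyap_cont: "continuous_on S (lyapunov f (U0 e))" for S
    by (rule continuous_on_slice[OF continuous_on_lyapunov])
  have "\<forall>x \<in> S4 \<inter> imbalance -` {n2..}. 0 < lyapunov f (U0 e) x"
    using lyapunov_U0_pos e \<open>0 < n2\<close> by auto
  then obtain \<alpha> where \<alpha>: "0 < \<alpha>" "\<forall>x \<in> S4 \<inter> imbalance -` {n2..}. \<alpha> \<le> lyapunov f (U0 e) x"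
    using compact_pos_lower_bound[OF compact_S4_imbalance_vimage lyap_cont] by blast
  have "\<exists>\<eta>>0. \<forall>x\<in>S4. imbalance x \<le> \<eta> \<longrightarrow> lyapunov f (U0 e) x < \<alpha>/2"
    by (rule compact_uniform_smallness[OF compact_S4 lyap_cont continuous_on_imbalance])
      (use \<alpha>(1) lyapunov_U0_balanced imbalance_nonneg in \<open>auto simp: order.antisym\<close>)
  then obtain \<eta> where \<eta>: "0 < \<eta>" "\<forall>x\<in>S4. imbalance x \<le> \<eta> \<longrightarrow> lyapunov f (U0 e) x < \<alpha>/2"
    by blast
  show ?thesis
  proof (rule that[of "min \<eta> (n2/2)" n2 \<alpha>])
    fix x assume x: "x \<in> S4" "min \<eta> (n2/2) \<le> imbalance x" "imbalance x \<le> n2"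
    have "0 < min \<eta> (n2/2)" using \<eta>(1) \<open>0 < n2\<close> by simp
    then have "0 < imbalance x" using x(2) by linarith
    moreover have "imbalance x \<le> n" using x(3) unfolding n2_def by simp
    ultimately show "0 < lyapunov_rate f (U0 e) x" using n(2)[OF x(1)] by simp
  qed (use \<eta> \<alpha> \<open>0 < n2\<close> in \<open>auto simp: n2_def\<close>)
qed

lemma lyapunov_levels_near_U0:
  assumes e: "0 < e" "e < 1" and c: "0 < c"
  obtains n1 n2 \<delta> a where "0 < n1" "n1 < n2" "n2 \<le> c" "0 < \<delta>"
    "\<And>U x. dist U (U0 e) < \<delta> \<Longrightarrow> x \<in> S4 \<Longrightarrow> n2 \<le> imbalance x \<Longrightarrow> a < lyapunov f U x"
    "\<And>U x. dist U (U0 e) < \<delta> \<Longrightarrow> x \<in> S4 \<Longrightarrow> imbalance x \<le> n1 \<Longrightarrow> lyapunov f U x \<le> a"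
    "\<And>U x. dist U (U0 e) < \<delta> \<Longrightarrow> x \<in> S4 \<Longrightarrow> n1 \<le> imbalance x \<Longrightarrow> imbalance x \<le> n2
       \<Longrightarrow> 0 < lyapunov_rate f U x"
proof -
  obtain n1 n2 \<alpha> where lev: "0 < n1" "n1 < n2" "n2 \<le> c" "0 < \<alpha>"
    and high: "\<And>x. x \<in> S4 \<Longrightarrow> n2 \<le> imbalance x \<Longrightarrow> \<alpha> \<le> lyapunov f (U0 e) x"
    and low: "\<And>x. x \<in> S4 \<Longrightarrow> imbalance x \<le> n1 \<Longrightarrow> lyapunov f (U0 e) x < \<alpha>/2"
    and rate: "\<And>x. x \<in> S4 \<Longrightarrow> n1 \<le> imbalance x \<Longrightarrow> imbalance x \<le> n2
                 \<Longrightarrow> 0 < lyapunov_rate f (U0 e) x"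
    using lyapunov_U0_levels[OF e c] by blast
  have "0 < lyapunov_rate f (U0 e) x" if "x \<in> S4 \<inter> imbalance -` {n1..n2}" for x
    using rate that by simp
  from robust_positivity[OF compact_S4_imbalance_vimage[OF closed_atLeastAtMost]
      continuous_on_lyapunov_rate this]
  obtain \<delta>1 where "0 < \<delta>1" and rate_U: "\<And>U x. dist U (U0 e) < \<delta>1 \<Longrightarrow>
      x \<in> S4 \<inter> imbalance -` {n1..n2} \<Longrightarrow> 0 < lyapunov_rate f U x"
    by blast
  have cont: "continuous_on UNIV (\<lambda>z. lyapunov f (fst z) (snd z) - 3/4 * \<alpha>)"
    "continuous_on UNIV (\<lambda>z. 3/4 * \<alpha> - lyapunov f (fst z) (snd z))"
    by (intro continuous_intros continuous_on_lyapunov)+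
  have "0 < lyapunov f (U0 e) x - 3/4 * \<alpha>" if "x \<in> S4 \<inter> imbalance -` {n2..}" for x
    using high[of x] that lev(4) by simp
  from robust_positivity[OF compact_S4_imbalance_vimage[OF closed_atLeast] cont(1) this]
  obtain \<delta>2 where "0 < \<delta>2" and high_U: "\<And>U x. dist U (U0 e) < \<delta>2 \<Longrightarrow>
      x \<in> S4 \<inter> imbalance -` {n2..} \<Longrightarrow> 0 < lyapunov f U x - 3/4 * \<alpha>"
    by blast
  have "0 < 3/4 * \<alpha> - lyapunov f (U0 e) x" if "x \<in> S4 \<inter> imbalance -` {..n1}" for x
    using low[of x] that lev(4) by simp
  from robust_positivity[OF compact_S4_imbalance_vimage[OF closed_atMost] cont(2) this]
  obtain \<delta>3 where "0 < \<delta>3" and low_U: "\<And>U x. dist U (U0 e) < \<delta>3 \<Longrightarrow>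
      x \<in> S4 \<inter> imbalance -` {..n1} \<Longrightarrow> 0 < 3/4 * \<alpha> - lyapunov f U x"
    by blast
  define \<delta> where "\<delta> = min \<delta>1 (min \<delta>2 \<delta>3)"
  show ?thesis
  proof (rule that[of n1 n2 \<delta> "3/4 * \<alpha>"])
    show "0 < \<delta>" unfolding \<delta>_def using \<open>0 < \<delta>1\<close> \<open>0 < \<delta>2\<close> \<open>0 < \<delta>3\<close> by simp
    fix U x assume U: "dist U (U0 e) < \<delta>" and x: "x \<in> S4"
    show "3/4 * \<alpha> < lyapunov f U x" if "n2 \<le> imbalance x"
      using high_U[of U x] U x that unfolding \<delta>_def by simp
    show "lyapunov f U x \<le> 3/4 * \<alpha>" if "imbalance x \<le> n1"
      using low_U[of U x] U x that unfolding \<delta>_def by simp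
    show "0 < lyapunov_rate f U x" if "n1 \<le> imbalance x" "imbalance x \<le> n2"
      using rate_U[of U x] U x that unfolding \<delta>_def by simp
  qed (use lev in auto)
qed

lemma imbalance_stays_above:
  assumes e: "0 < e" "e < 1" and c: "0 < c"
  obtains n1 \<delta> where "0 < n1" "0 < \<delta>"
    "\<And>U x t. dist U (U0 e) < \<delta> \<Longrightarrow> is_solution f U x \<Longrightarrow> c \<le> imbalance (x 0) \<Longrightarrow> 0 \<le> t
       \<Longrightarrow> n1 < imbalance (x t)"
proof -
  obtain n1 n2 \<delta> a where lev: "0 < n1" "n1 < n2" "n2 \<le> c" "0 < \<delta>"
    and high: "\<And>U x. dist U (U0 e) < \<delta> \<Longrightarrow> x \<in> S4 \<Longrightarrow> n2 \<le> imbalance x \<Longrightarrow> a < lyapunov f U x"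
    and low: "\<And>U x. dist U (U0 e) < \<delta> \<Longrightarrow> x \<in> S4 \<Longrightarrow> imbalance x \<le> n1 \<Longrightarrow> lyapunov f U x \<le> a"
    and rate: "\<And>U x. dist U (U0 e) < \<delta> \<Longrightarrow> x \<in> S4 \<Longrightarrow> n1 \<le> imbalance x \<Longrightarrow> imbalance x \<le> n2
                 \<Longrightarrow> 0 < lyapunov_rate f U x"
    by (rule lyapunov_levels_near_U0[OF e c]) blast
  show ?thesis
  proof (rule that[of n1 \<delta>])
    fix U x and t :: real
    assume U: "dist U (U0 e) < \<delta>" and sol: "is_solution f U x"
      and x0: "c \<le> imbalance (x 0)" and t: "0 \<le> t"
    have S4: "x s \<in> S4" if "0 \<le> s" for s using sol that unfolding is_solution_def by simp
    have xc: "continuous_on {0..} x" using sol by (rule is_solution_continuous)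
    show "n1 < imbalance (x t)"
    proof (rule stays_above_lower_level[where V="\<lambda>s::real. lyapunov f U (x s)" and a=a,
          OF _ _ _ lev(2) _ _ _ t])
      show "continuous_on {0..} (\<lambda>t. imbalance (x t))"
        by (rule continuous_on_compose2[OF continuous_on_imbalance xc]) auto
      show "continuous_on {0..} (\<lambda>t. lyapunov f U (x t))"
        by (rule continuous_on_compose2[OF continuous_on_slice[OF continuous_on_lyapunov] xc]) auto
      show "n2 \<le> imbalance (x 0)" using x0 lev(3) by simp
    next
      fix s assume s: "0 < s" "n1 < imbalance (x s)" "imbalance (x s) < n2"
      then have "0 < lyapunov_rate f U (x s)" using rate[OF U S4[of s]] by simp
      moreover have "((\<lambda>t. lyapunov f U (x t)) has_real_derivative lyapunov_rate f U (x s)) (at s)"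
        by (rule has_real_derivative_lyapunov[OF is_solution_has_vector_derivative[OF sol s(1)]])
      ultimately show "\<exists>y. ((\<lambda>t. lyapunov f U (x t)) has_real_derivative y) (at s) \<and> 0 \<le> y"
        by (intro exI[of _ "lyapunov_rate f U (x s)"]) simp
    next
      fix s assume "0 \<le> s" "n2 \<le> imbalance (x s)"
      then show "a < lyapunov f U (x s)" using high[OF U S4] by simp
    next
      fix s assume "0 \<le> s" "imbalance (x s) \<le> n1"
      then show "lyapunov f U (x s) \<le> a" using low[OF U S4] by simp
    qed
  qed (use lev in auto)
qed

lemma decay_bounds_near_U0:
  assumes e: "0 < e" "e < 1" and n1: "0 < n1"
  obtains \<delta> k where "0 < \<delta>" "0 < k"
    "\<And>U x. dist U (U0 e) < \<delta> \<Longrightarrow> x \<in> S4 \<Longrightarrow> n1 \<le> imbalance x \<Longrightarrow> excess U x 4 < 0"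
    "\<And>U x. dist U (U0 e) < \<delta> \<Longrightarrow> x \<in> S4 \<Longrightarrow> n1 \<le> imbalance x \<Longrightarrow> k \<le> total_rate f U x"
proof -
  define K where "K = S4 \<inter> imbalance -` {n1..}"
  have K: "compact K" unfolding K_def by (rule compact_S4_imbalance_vimage[OF closed_atLeast])
  have K_pos: "x \<in> S4" "0 < imbalance x" if "x \<in> K" for x
    using that n1 unfolding K_def by auto
  have "\<forall>x\<in>K. 0 < total_rate f (U0 e) x"
    using total_rate_U0_pos K_pos e by simp
  then obtain F0 where "0 < F0" and F0: "\<forall>x\<in>K. F0 \<le> total_rate f (U0 e) x"
    using compact_pos_lower_bound[OF K continuous_on_slice[OF continuous_on_total_rate]] by blast
  have cont: "continuous_on UNIV (\<lambda>z. total_rate f (fst z) (snd z) - F0/2)"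
    "continuous_on UNIV (\<lambda>z. - excess (fst z) (snd z) 4)"
    by (intro continuous_intros continuous_on_total_rate continuous_on_excess)+
  have "0 < total_rate f (U0 e) x - F0/2" if "x \<in> K" for x
    using F0 that \<open>0 < F0\<close> by fastforce
  from robust_positivity[OF K cont(1) this]
  obtain \<delta>1 where "0 < \<delta>1"
    and rate_U: "\<And>U x. dist U (U0 e) < \<delta>1 \<Longrightarrow> x \<in> K \<Longrightarrow> 0 < total_rate f U x - F0/2"
    by blast
  have "0 < - excess (U0 e) x 4" if "x \<in> K" for x
    using excess_U0_4_neg[OF K_pos(1)[OF that] e(2) K_pos(2)[OF that]] by simp
  from robust_positivity[OF K cont(2) this]
  obtain \<delta>2 where "0 < \<delta>2"
    and excess_U: "\<And>U x. dist U (U0 e) < \<delta>2 \<Longrightarrow> x \<in> K \<Longrightarrow> 0 < - excess U x 4"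
    by blast
  show ?thesis
  proof (rule that[of "min \<delta>1 \<delta>2" "F0/2"])
    fix U x assume "dist U (U0 e) < min \<delta>1 \<delta>2" "x \<in> S4" "n1 \<le> imbalance x"
    then have "dist U (U0 e) < \<delta>1" "dist U (U0 e) < \<delta>2" "x \<in> K" unfolding K_def by auto
    then show "excess U x 4 < 0" "F0/2 \<le> total_rate f U x"
      using rate_U excess_U by force+
  qed (use \<open>0 < \<delta>1\<close> \<open>0 < \<delta>2\<close> \<open>0 < F0\<close> in simp_all)
qed

lemma coord4_tendsto_zero_near_U0:
  assumes e: "0 < e" "e < 1" and n1: "0 < n1"
  obtains \<delta> where "0 < \<delta>"
    "\<And>U x. dist U (U0 e) < \<delta> \<Longrightarrow> is_solution f U x \<Longrightarrow> (\<And>t. 0 \<le> t \<Longrightarrow> n1 < imbalance (x t))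
       \<Longrightarrow> ((\<lambda>t. x t $ 4) \<longlongrightarrow> 0) at_top"
proof -
  obtain \<delta> k where "0 < \<delta>" "0 < k"
    and excess_U: "\<And>U x. dist U (U0 e) < \<delta> \<Longrightarrow> x \<in> S4 \<Longrightarrow> n1 \<le> imbalance x \<Longrightarrow> excess U x 4 < 0"
    and rate_U: "\<And>U x. dist U (U0 e) < \<delta> \<Longrightarrow> x \<in> S4 \<Longrightarrow> n1 \<le> imbalance x \<Longrightarrow> k \<le> total_rate f U x"
    by (rule decay_bounds_near_U0[OF e n1]) blast
  show ?thesis
  proof (rule that[OF \<open>0 < \<delta>\<close>])
    fix U x assume U: "dist U (U0 e) < \<delta>" and sol: "is_solution f U x"
      and above: "\<And>t. 0 \<le> t \<Longrightarrow> n1 < imbalance (x t)"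
    have S4: "x t \<in> S4" if "0 \<le> t" for t using sol that unfolding is_solution_def by simp
    show "((\<lambda>t. x t $ 4) \<longlongrightarrow> 0) at_top"
    proof (rule nonneg_decay_tendsto_zero[where k=k and y'="\<lambda>t. vfield f U (x t) $ 4"])
      show "continuous_on {0..} (\<lambda>t. x t $ 4)"
        by (intro continuous_on_component is_solution_continuous[OF sol])
      fix t :: real assume "0 < t"
      then show "((\<lambda>t. x t $ 4) has_real_derivative vfield f U (x t) $ 4) (at t)"
        by (intro has_real_derivative_vec_nth is_solution_has_vector_derivative[OF sol])
      have x: "x t \<in> S4" "n1 \<le> imbalance (x t)"
        using S4 above[of t] \<open>0 < t\<close> by (simp_all add: less_imp_le)
      have "kfun U (x t) 4 = 0"
        using excess_U[OF U x] unfolding kfun_eq_max_excess by simp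
      then have "vfield f U (x t) $ 4 = - (total_rate f U (x t) * x t $ 4)"
        unfolding vfield_def total_rate_def by (simp add: zero)
      moreover have "k * x t $ 4 \<le> total_rate f U (x t) * x t $ 4"
        using rate_U[OF U x] S4_nonneg[OF x(1)] by (intro mult_right_mono)
      ultimately show "vfield f U (x t) $ 4 \<le> - k * x t $ 4" by simp
    qed (use \<open>0 < k\<close> S4_nonneg S4 in auto)
  qed
qed

end

theorem proposition5:
  fixes f :: "real \<Rightarrow> real" and \<epsilon> :: real and C :: "(real^4) set"
  assumes "continuous_on {0..} f"
    and "\<forall>u\<ge>0. f u \<ge> 0"
    and "f 0 = 0"
    and "\<forall>u>0. f u > 0"
    and "0 < \<epsilon>" and "\<epsilon> < 1"
    and "closed C" and "C \<subseteq> S4" and "C \<inter> E0 = {}"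
  shows "\<exists>\<delta>>0. \<forall>U :: real^4^4. norm (U - U0 \<epsilon>) < \<delta> \<longrightarrow>
           (\<forall>x. is_solution f U x \<and> x 0 \<in> C \<longrightarrow> ((\<lambda>t. x t $ 4) \<longlongrightarrow> 0) at_top)"
proof -
  interpret rate_function f using assms(1,3,4) by unfold_locales auto
  obtain c where "0 < c" and c: "\<And>x. x \<in> C \<Longrightarrow> c \<le> imbalance x"
    using imbalance_lower_bound_off_E0[OF assms(7-9)] by blast
  obtain n1 \<delta>1 where "0 < n1" "0 < \<delta>1" and above: "\<And>U x t. dist U (U0 \<epsilon>) < \<delta>1 \<Longrightarrow>
      is_solution f U x \<Longrightarrow> c \<le> imbalance (x 0) \<Longrightarrow> 0 \<le> t \<Longrightarrow> n1 < imbalance (x t)"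
    using imbalance_stays_above[OF assms(5,6) \<open>0 < c\<close>] by blast
  obtain \<delta>2 where "0 < \<delta>2" and decay: "\<And>U x. dist U (U0 \<epsilon>) < \<delta>2 \<Longrightarrow> is_solution f U x \<Longrightarrow>
      (\<And>t. 0 \<le> t \<Longrightarrow> n1 < imbalance (x t)) \<Longrightarrow> ((\<lambda>t. x t $ 4) \<longlongrightarrow> 0) at_top"
    using coord4_tendsto_zero_near_U0[OF assms(5,6) \<open>0 < n1\<close>] by blast
  show ?thesis
  proof (intro exI[of _ "min \<delta>1 \<delta>2"] conjI allI impI)
    fix U x assume U: "norm (U - U0 \<epsilon>) < min \<delta>1 \<delta>2" and x: "is_solution f U x \<and> x 0 \<in> C"
    then have "dist U (U0 \<epsilon>) < \<delta>1" "dist U (U0 \<epsilon>) < \<delta>2" by (simp_all add: dist_norm)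
    then show "((\<lambda>t. x t $ 4) \<longlongrightarrow> 0) at_top"
      using decay above c x by blast
  qed (use \<open>0 < \<delta>1\<close> \<open>0 < \<delta>2\<close> in simp)
qed

end
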